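(* Let $(X,d)$ be a compact metric space and let $C(X)$ denote the space of all continuous functions $f:X\to\mathbb{R}$. If $X$ is uncountable, then there exists no reproducing kernel Hilbert space $H$ of functions on $X$ such that $C(X)\subset H$.
   Context: A reproducing kernel Hilbert space (RKHS) on a set $X$ is a Hilbert space $H$ consisting of real-valued functions $f:X\to\mathbb{R}$ (with the pointwise vector space operations) such that for every $x\in X$ the point evaluation $f\mapsto f(x)$ is a continuous linear functional on $H$; equivalently, $H$ has a reproducing kernel $k:X\times X\to\mathbb{R}$ with $k(\cdot,x)\in H$ and $f(x)=\langle f,k(\cdot,x)\rangle_H$ for all $f\in H$, $x\in X$. The inclusion $C(X)\subset H$ is meant as sets of functions on $X$. *)

theory Defs
  imports "HOL-Analysis.Analysis"
begin

definition hilbert_function_space ::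
  "('a \<Rightarrow> real) set \<Rightarrow> (('a \<Rightarrow> real) \<Rightarrow> ('a \<Rightarrow> real) \<Rightarrow> real) \<Rightarrow> bool" where
  "hilbert_function_space H ip \<longleftrightarrow>
     (\<lambda>x. 0) \<in> H \<and>
     (\<forall>f\<in>H. \<forall>g\<in>H. (\<lambda>x. f x + g x) \<in> H) \<and>
     (\<forall>f\<in>H. \<forall>c::real. (\<lambda>x. c * f x) \<in> H) \<and>
     (\<forall>f\<in>H. \<forall>g\<in>H. ip f g = ip g f) \<and>
     (\<forall>f\<in>H. \<forall>g\<in>H. \<forall>h\<in>H. ip (\<lambda>x. f x + g x) h = ip f h + ip g h) \<and>
     (\<forall>f\<in>H. \<forall>g\<in>H. \<forall>c::real. ip (\<lambda>x. c * f x) g = c * ip f g) \<and>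
     (\<forall>f\<in>H. ip f f \<ge> 0) \<and>
     (\<forall>f\<in>H. ip f f = 0 \<longrightarrow> f = (\<lambda>x. 0)) \<and>
     \<comment> \<open>completeness: every Cauchy sequence in H converges in H\<close>
     (\<forall>u::nat \<Rightarrow> ('a \<Rightarrow> real). (\<forall>n. u n \<in> H) \<longrightarrow>
        (\<forall>e>0. \<exists>N. \<forall>m\<ge>N. \<forall>n\<ge>N. sqrt (ip (\<lambda>x. u m x - u n x) (\<lambda>x. u m x - u n x)) < e) \<longrightarrow>
        (\<exists>f\<in>H. (\<lambda>n. sqrt (ip (\<lambda>x. u n x - f x) (\<lambda>x. u n x - f x))) \<longlonglongrightarrow> 0))"

definition rkhs ::
  "('a \<Rightarrow> real) set \<Rightarrow> (('a \<Rightarrow> real) \<Rightarrow> ('a \<Rightarrow> real) \<Rightarrow> real) \<Rightarrow> bool" where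
  "rkhs H ip \<longleftrightarrow> hilbert_function_space H ip \<and>
     (\<forall>x. \<exists>C. \<forall>f\<in>H. \<bar>f x\<bar> \<le> C * sqrt (ip f f))"

end

theory Submission
  imports Defs
begin

text \<open>
  If an RKHS \<open>H\<close> contains \<open>C(X)\<close>, Baire's theorem in the Banach space of bounded
  continuous functions shows that some sublevel set \<open>{f. \<parallel>f\<parallel>\<^sub>H \<le> m}\<close> is dense in a ball;
  by homogeneity every continuous \<open>f\<close> is uniformly approximable by functions of \<open>H\<close>-norm
  \<open>\<le> K \<parallel>f\<parallel>\<^sub>\<infinity>\<close>, and summing a dyadic series of such approximations (using completeness
  of \<open>H\<close> and continuity of point evaluations) gives \<open>\<parallel>f\<parallel>\<^sub>H \<le> M \<parallel>f\<parallel>\<^sub>\<infinity>\<close>.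

  If \<open>X\<close> is uncountable, infinitely many points \<open>x\<close> share a bound \<open>\<bar>f x\<bar> \<le> c \<parallel>f\<parallel>\<^sub>H\<close>.
  For \<open>N\<close> of them take continuous bumps \<open>b\<^sub>x\<close> with \<open>b\<^sub>x x = 1\<close>, values in \<open>[0,1]\<close> and
  disjoint supports, so \<open>\<parallel>b\<^sub>x\<parallel>\<^sub>H \<ge> 1/c\<close>. By the parallelogram law some choice of signs
  gives \<open>\<parallel>\<Sum> \<pm>b\<^sub>x\<parallel>\<^sub>H\<^sup>2 \<ge> \<Sum> \<parallel>b\<^sub>x\<parallel>\<^sub>H\<^sup>2 \<ge> N/c\<^sup>2\<close>, while \<open>\<parallel>\<Sum> \<pm>b\<^sub>x\<parallel>\<^sub>\<infinity> \<le> 1\<close>; hence \<open>N \<le> c\<^sup>2 M\<^sup>2\<close>.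
\<close>

section \<open>Hilbert spaces of real functions\<close>

locale hilbert_fun_space =
  fixes H :: "('a \<Rightarrow> real) set" and ip :: "('a \<Rightarrow> real) \<Rightarrow> ('a \<Rightarrow> real) \<Rightarrow> real"
  assumes hilbert: "hilbert_function_space H ip"
begin

lemma zero_mem: "(\<lambda>x. 0) \<in> H"
  and add_mem: "f \<in> H \<Longrightarrow> g \<in> H \<Longrightarrow> (\<lambda>x. f x + g x) \<in> H"
  and scale_mem: "f \<in> H \<Longrightarrow> (\<lambda>x. c * f x) \<in> H"
  and ip_commute: "f \<in> H \<Longrightarrow> g \<in> H \<Longrightarrow> ip f g = ip g f"
  and ip_add_left: "f \<in> H \<Longrightarrow> g \<in> H \<Longrightarrow> h \<in> H \<Longrightarrow> ip (\<lambda>x. f x + g x) h = ip f h + ip g h"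
  and ip_scale_left: "f \<in> H \<Longrightarrow> g \<in> H \<Longrightarrow> ip (\<lambda>x. c * f x) g = c * ip f g"
  and ip_self_nonneg: "f \<in> H \<Longrightarrow> 0 \<le> ip f f"
  and ip_self_eq_0: "f \<in> H \<Longrightarrow> ip f f = 0 \<Longrightarrow> f = (\<lambda>x. 0)"
  using hilbert unfolding hilbert_function_space_def by blast+

lemma diff_mem: "f \<in> H \<Longrightarrow> g \<in> H \<Longrightarrow> (\<lambda>x. f x - g x) \<in> H"
  using add_mem[of f "\<lambda>x. (-1) * g x"] scale_mem[of g "-1"] by simp

lemma sum_mem: "finite A \<Longrightarrow> (\<And>i. i \<in> A \<Longrightarrow> u i \<in> H) \<Longrightarrow> (\<lambda>x. \<Sum>i\<in>A. u i x) \<in> H"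
  by (induction A rule: finite_induct) (simp_all add: zero_mem add_mem)

lemma ip_add_right: "f \<in> H \<Longrightarrow> g \<in> H \<Longrightarrow> h \<in> H \<Longrightarrow> ip h (\<lambda>x. f x + g x) = ip h f + ip h g"
  by (simp add: ip_commute[of h] add_mem ip_add_left)

lemma ip_scale_right: "f \<in> H \<Longrightarrow> g \<in> H \<Longrightarrow> ip g (\<lambda>x. c * f x) = c * ip g f"
  by (simp add: ip_commute[of g] scale_mem ip_scale_left)

lemma ip_diff_left: "f \<in> H \<Longrightarrow> g \<in> H \<Longrightarrow> h \<in> H \<Longrightarrow> ip (\<lambda>x. f x - g x) h = ip f h - ip g h"
  using ip_add_left[of f "\<lambda>x. (-1) * g x" h] scale_mem[of g "-1"] ip_scale_left[of g h "-1"] by simp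

lemma ip_diff_right: "f \<in> H \<Longrightarrow> g \<in> H \<Longrightarrow> h \<in> H \<Longrightarrow> ip h (\<lambda>x. f x - g x) = ip h f - ip h g"
  by (simp add: ip_commute[of h] diff_mem ip_diff_left)

lemma ip_self_add: "f \<in> H \<Longrightarrow> g \<in> H \<Longrightarrow>
    ip (\<lambda>x. f x + g x) (\<lambda>x. f x + g x) = ip f f + 2 * ip f g + ip g g"
  by (simp add: ip_add_left ip_add_right add_mem ip_commute[of g f])

lemma ip_self_diff: "f \<in> H \<Longrightarrow> g \<in> H \<Longrightarrow>
    ip (\<lambda>x. f x - g x) (\<lambda>x. f x - g x) = ip f f - 2 * ip f g + ip g g"
  by (simp add: ip_diff_left ip_diff_right diff_mem ip_commute[of g f])

definition hnorm :: "('a \<Rightarrow> real) \<Rightarrow> real" where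
  "hnorm f = sqrt (ip f f)"

lemma hnorm_nonneg: "f \<in> H \<Longrightarrow> 0 \<le> hnorm f"
  by (simp add: hnorm_def ip_self_nonneg)

lemma hnorm_power2: "f \<in> H \<Longrightarrow> (hnorm f)\<^sup>2 = ip f f"
  by (simp add: hnorm_def ip_self_nonneg)

lemma hnorm_scale:
  assumes "f \<in> H"
  shows "hnorm (\<lambda>x. c * f x) = \<bar>c\<bar> * hnorm f"
proof -
  have "ip (\<lambda>x. c * f x) (\<lambda>x. c * f x) = c\<^sup>2 * ip f f"
    using assms by (simp add: ip_scale_left ip_scale_right scale_mem power2_eq_square)
  then show ?thesis
    by (simp add: hnorm_def real_sqrt_mult)
qed

lemma hnorm_diff_commute: "f \<in> H \<Longrightarrow> g \<in> H \<Longrightarrow> hnorm (\<lambda>x. f x - g x) = hnorm (\<lambda>x. g x - f x)"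
  using hnorm_scale[OF diff_mem[of g f], of "-1"] by simp

lemma Cauchy_Schwarz:
  assumes f: "f \<in> H" and g: "g \<in> H"
  shows "(ip f g)\<^sup>2 \<le> ip f f * ip g g"
proof (cases "ip g g = 0")
  case True
  then have "g = (\<lambda>x. 0)"
    using ip_self_eq_0 g by blast
  then have "ip f g = 0"
    using ip_scale_right[OF g f, of 0] by simp
  then show ?thesis
    using True by simp
next
  case False
  then have gg: "ip g g > 0"
    using ip_self_nonneg[OF g] by linarith
  define t where "t = ip f g / ip g g"
  have "0 \<le> ip (\<lambda>x. f x - t * g x) (\<lambda>x. f x - t * g x)"
    using ip_self_nonneg diff_mem scale_mem f g by blast
  also have "\<dots> = ip f f - 2 * t * ip f g + t\<^sup>2 * ip g g"
    by (simp add: ip_self_diff[OF f scale_mem[OF g]] ip_scale_left ip_scale_right scale_mem f g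
        power2_eq_square)
  also have "\<dots> = ip f f - (ip f g)\<^sup>2 / ip g g"
    using gg by (simp add: t_def field_simps power2_eq_square)
  finally have "(ip f g)\<^sup>2 / ip g g \<le> ip f f"
    by simp
  then show ?thesis
    using gg by (simp add: pos_divide_le_eq mult.commute)
qed

lemma ip_le_hnorm_mult: "f \<in> H \<Longrightarrow> g \<in> H \<Longrightarrow> ip f g \<le> hnorm f * hnorm g"
  using Cauchy_Schwarz[of f g] real_sqrt_le_mono[of "(ip f g)\<^sup>2" "ip f f * ip g g"]
  by (simp add: hnorm_def real_sqrt_mult)

lemma hnorm_add_le:
  assumes f: "f \<in> H" and g: "g \<in> H"
  shows "hnorm (\<lambda>x. f x + g x) \<le> hnorm f + hnorm g"
proof (rule power2_le_imp_le)
  have "(hnorm (\<lambda>x. f x + g x))\<^sup>2 = ip f f + 2 * ip f g + ip g g"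
    using f g by (simp add: hnorm_power2 add_mem ip_self_add)
  also have "\<dots> \<le> (hnorm f)\<^sup>2 + 2 * (hnorm f * hnorm g) + (hnorm g)\<^sup>2"
    using ip_le_hnorm_mult[OF f g] f g by (simp add: hnorm_power2)
  finally show "(hnorm (\<lambda>x. f x + g x))\<^sup>2 \<le> (hnorm f + hnorm g)\<^sup>2"
    by (simp add: power2_sum)
  show "0 \<le> hnorm f + hnorm g"
    using f g by (simp add: hnorm_nonneg)
qed

lemma hnorm_diff_le: "f \<in> H \<Longrightarrow> g \<in> H \<Longrightarrow> hnorm (\<lambda>x. f x - g x) \<le> hnorm f + hnorm g"
  using hnorm_add_le[OF _ scale_mem, of f g "-1"] hnorm_scale[of g "-1"] by simp

lemma hnorm_sum_le:
  "finite A \<Longrightarrow> (\<And>i. i \<in> A \<Longrightarrow> u i \<in> H) \<Longrightarrow> hnorm (\<lambda>x. \<Sum>i\<in>A. u i x) \<le> (\<Sum>i\<in>A. hnorm (u i))"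
proof (induction A rule: finite_induct)
  case empty
  then show ?case
    using hnorm_scale[OF zero_mem, of 0] by simp
next
  case (insert a A)
  then have "hnorm (\<lambda>x. u a x + (\<Sum>i\<in>A. u i x)) \<le> hnorm (u a) + hnorm (\<lambda>x. \<Sum>i\<in>A. u i x)"
    using hnorm_add_le[of "u a" "\<lambda>x. \<Sum>i\<in>A. u i x"] sum_mem[of A u] by simp
  with insert show ?case
    by simp
qed

lemma parallelogram:
  "f \<in> H \<Longrightarrow> g \<in> H \<Longrightarrow>
    (hnorm (\<lambda>x. f x + g x))\<^sup>2 + (hnorm (\<lambda>x. f x - g x))\<^sup>2 = 2 * (hnorm f)\<^sup>2 + 2 * (hnorm g)\<^sup>2"
  by (simp add: hnorm_power2 add_mem diff_mem ip_self_add ip_self_diff)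

lemma exists_sign_hnorm_add_ge:
  assumes "f \<in> H" and "g \<in> H"
  obtains t :: real where "t = 1 \<or> t = -1"
    "(hnorm f)\<^sup>2 + (hnorm g)\<^sup>2 \<le> (hnorm (\<lambda>x. f x + t * g x))\<^sup>2"
proof -
  have "(hnorm f)\<^sup>2 + (hnorm g)\<^sup>2 \<le> (hnorm (\<lambda>x. f x + g x))\<^sup>2 \<or>
      (hnorm f)\<^sup>2 + (hnorm g)\<^sup>2 \<le> (hnorm (\<lambda>x. f x - g x))\<^sup>2"
    using parallelogram[OF assms] by linarith
  then show ?thesis
    using that[of 1] that[of "-1"] by auto
qed

lemma exists_signs_hnorm_sum_ge:
  assumes "finite G" and "\<And>x. x \<in> G \<Longrightarrow> u x \<in> H"
  shows "\<exists>e. (\<forall>x. e x = 1 \<or> e x = -1) \<and>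
    (\<Sum>x\<in>G. (hnorm (u x))\<^sup>2) \<le> (hnorm (\<lambda>y. \<Sum>x\<in>G. e x * u x y))\<^sup>2"
  using assms
proof (induction G rule: finite_induct)
  case empty
  show ?case
    by (rule exI[of _ "\<lambda>_. 1"]) simp
next
  case (insert a G)
  then obtain e where e: "\<forall>x. e x = 1 \<or> e x = -1"
    and IH: "(\<Sum>x\<in>G. (hnorm (u x))\<^sup>2) \<le> (hnorm (\<lambda>y. \<Sum>x\<in>G. e x * u x y))\<^sup>2"
    by auto
  define s where "s = (\<lambda>y. \<Sum>x\<in>G. e x * u x y)"
  have a: "u a \<in> H"
    using insert.prems by simp
  have "(\<lambda>y. e x * u x y) \<in> H" if "x \<in> G" for x
    using insert.prems that by (simp add: scale_mem)
  then have s: "s \<in> H"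
    unfolding s_def using insert.hyps(1) by (rule sum_mem[rotated])
  have sum_upd: "(\<lambda>y. \<Sum>x\<in>insert a G. (e(a := t)) x * u x y) = (\<lambda>y. s y + t * u a y)" for t
  proof
    fix y
    have "(\<Sum>x\<in>G. (e(a := t)) x * u x y) = s y"
      unfolding s_def using insert.hyps(2) by (intro sum.cong) auto
    then show "(\<Sum>x\<in>insert a G. (e(a := t)) x * u x y) = s y + t * u a y"
      using insert.hyps by simp
  qed
  obtain t where t: "t = 1 \<or> t = -1"
    and "(hnorm s)\<^sup>2 + (hnorm (u a))\<^sup>2 \<le> (hnorm (\<lambda>y. s y + t * u a y))\<^sup>2"
    using exists_sign_hnorm_add_ge[OF s a] by blast
  moreover have "(\<Sum>x\<in>insert a G. (hnorm (u x))\<^sup>2) \<le> (hnorm s)\<^sup>2 + (hnorm (u a))\<^sup>2"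
    using IH insert.hyps by (simp add: s_def)
  ultimately have "(\<Sum>x\<in>insert a G. (hnorm (u x))\<^sup>2) \<le>
      (hnorm (\<lambda>y. \<Sum>x\<in>insert a G. (e(a := t)) x * u x y))\<^sup>2"
    unfolding sum_upd by linarith
  moreover have "\<forall>x. (e(a := t)) x = 1 \<or> (e(a := t)) x = -1"
    using e t by simp
  ultimately show ?case
    by blast
qed

lemma hnorm_Cauchy_imp_convergent:
  assumes "\<And>n. u n \<in> H" and "\<forall>e>0. \<exists>N. \<forall>m\<ge>N. \<forall>n\<ge>N. hnorm (\<lambda>x. u m x - u n x) < e"
  shows "\<exists>f\<in>H. (\<lambda>n. hnorm (\<lambda>x. u n x - f x)) \<longlonglongrightarrow> 0"
  using hilbert assms unfolding hilbert_function_space_def hnorm_def by blast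

lemma summable_hnorm_imp_convergent:
  assumes u: "\<And>j. u j \<in> H" and summable: "summable (\<lambda>j. hnorm (u j))"
  shows "\<exists>G\<in>H. (\<lambda>n. hnorm (\<lambda>x. (\<Sum>j<n. u j x) - G x)) \<longlonglongrightarrow> 0"
proof (rule hnorm_Cauchy_imp_convergent)
  define S where "S n = (\<lambda>x. \<Sum>j<n. u j x)" for n
  show S: "(\<lambda>x. \<Sum>j<n. u j x) \<in> H" for n
    using u by (simp add: sum_mem)
  have S_diff: "hnorm (\<lambda>x. S n x - S m x) \<le> (\<Sum>j\<in>{m..<n}. hnorm (u j))" if "m \<le> n" for m n
  proof -
    have "S n x - S m x = (\<Sum>j\<in>{m..<n}. u j x)" for x
      using sum_diff_nat_ivl[of 0 m n] that by (simp add: S_def lessThan_atLeast0)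
    then have "(\<lambda>x. S n x - S m x) = (\<lambda>x. \<Sum>j\<in>{m..<n}. u j x)"
      by simp
    then show ?thesis
      using u by (simp add: hnorm_sum_le)
  qed
  show "\<forall>e>0. \<exists>N. \<forall>m\<ge>N. \<forall>n\<ge>N. hnorm (\<lambda>x. (\<Sum>j<m. u j x) - (\<Sum>j<n. u j x)) < e"
  proof (intro allI impI)
    fix e :: real
    assume "e > 0"
    with summable obtain N where "\<forall>m\<ge>N. \<forall>n. norm (\<Sum>j\<in>{m..<n}. hnorm (u j)) < e"
      unfolding summable_Cauchy by blast
    then have N: "(\<Sum>j\<in>{m..<n}. hnorm (u j)) < e" if "m \<ge> N" for m n
      using that by (simp add: hnorm_nonneg u sum_nonneg)
    have S_close: "hnorm (\<lambda>x. S m x - S n x) < e" if "N \<le> n" "n \<le> m" for m n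
      using S_diff[OF that(2)] N[OF that(1), of m] by linarith
    have "hnorm (\<lambda>x. S m x - S n x) < e" if "m \<ge> N" "n \<ge> N" for m n
    proof (cases "n \<le> m")
      case True
      with that show ?thesis
        by (simp add: S_close)
    next
      case False
      with that have "hnorm (\<lambda>x. S n x - S m x) < e"
        by (simp add: S_close)
      then show ?thesis
        using hnorm_diff_commute[OF S[of n] S[of m]] by (simp add: S_def)
    qed
    then show "\<exists>N. \<forall>m\<ge>N. \<forall>n\<ge>N. hnorm (\<lambda>x. (\<Sum>j<m. u j x) - (\<Sum>j<n. u j x)) < e"
      unfolding S_def by blast
  qed
qed

end

locale rkhs_space =
  fixes H :: "('a \<Rightarrow> real) set" and ip :: "('a \<Rightarrow> real) \<Rightarrow> ('a \<Rightarrow> real) \<Rightarrow> real"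
  assumes rkhs: "rkhs H ip"

sublocale rkhs_space \<subseteq> hilbert_fun_space
  using rkhs unfolding rkhs_def by unfold_locales blast

context rkhs_space
begin

lemma eval_bounded: "\<exists>C. \<forall>f\<in>H. \<bar>f x\<bar> \<le> C * hnorm f"
  using rkhs unfolding rkhs_def hnorm_def by blast

lemma hnorm_tendsto_imp_tendsto:
  assumes u: "\<And>n. u n \<in> H" and f: "f \<in> H" and lim: "(\<lambda>n. hnorm (\<lambda>x. u n x - f x)) \<longlonglongrightarrow> 0"
  shows "(\<lambda>n. u n x) \<longlonglongrightarrow> f x"
proof -
  obtain C where C: "\<forall>f\<in>H. \<bar>f x\<bar> \<le> C * hnorm f"
    using eval_bounded by blast
  have "norm (u n x - f x) \<le> C * hnorm (\<lambda>x. u n x - f x)" for n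
    using bspec[OF C diff_mem[OF u f]] by simp
  then have "\<forall>\<^sub>F n in sequentially. norm (u n x - f x) \<le> C * hnorm (\<lambda>x. u n x - f x)"
    by simp
  moreover have "(\<lambda>n. C * hnorm (\<lambda>x. u n x - f x)) \<longlonglongrightarrow> 0"
    using tendsto_mult_right_zero[OF lim] .
  ultimately have "(\<lambda>n. u n x - f x) \<longlonglongrightarrow> 0"
    by (rule Lim_null_comparison)
  then show ?thesis
    by (simp add: LIM_zero_iff)
qed

lemma hnorm_le_suminf:
  assumes u: "\<And>j. u j \<in> H" and summable: "summable (\<lambda>j. hnorm (u j))"
    and f: "f \<in> H" and conv: "\<And>x. (\<lambda>n. \<Sum>j<n. u j x) \<longlonglongrightarrow> f x"
  shows "hnorm f \<le> (\<Sum>j. hnorm (u j))"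
proof -
  define S where "S n = (\<lambda>x. \<Sum>j<n. u j x)" for n
  have S: "S n \<in> H" for n
    unfolding S_def using u by (simp add: sum_mem)
  obtain G where G: "G \<in> H" and lim: "(\<lambda>n. hnorm (\<lambda>x. S n x - G x)) \<longlonglongrightarrow> 0"
    using summable_hnorm_imp_convergent[OF u summable] by (auto simp: S_def)
  have "G = f"
  proof
    fix x
    have "(\<lambda>n. \<Sum>j<n. u j x) \<longlonglongrightarrow> G x"
      using hnorm_tendsto_imp_tendsto[OF S G lim] by (simp add: S_def)
    then show "G x = f x"
      using conv LIMSEQ_unique by blast
  qed
  have "hnorm f - (\<Sum>j. hnorm (u j)) \<le> hnorm (\<lambda>x. S n x - G x)" for n
  proof -
    have "hnorm f \<le> hnorm (S n) + hnorm (\<lambda>x. f x - S n x)"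
      using hnorm_add_le[OF S diff_mem[OF f S], of n n] by simp
    also have "hnorm (S n) \<le> (\<Sum>j<n. hnorm (u j))"
      unfolding S_def using u by (simp add: hnorm_sum_le)
    also have "\<dots> \<le> (\<Sum>j. hnorm (u j))"
      using summable u by (simp add: sum_le_suminf hnorm_nonneg)
    finally show ?thesis
      using hnorm_diff_commute[OF f S] \<open>G = f\<close> by simp
  qed
  then have "hnorm f - (\<Sum>j. hnorm (u j)) \<le> 0"
    using LIMSEQ_le_const[OF lim] by blast
  then show ?thesis
    by simp
qed

end

section \<open>Boundedness of the inclusion of continuous functions\<close>

lemma Baire_closure_sublevel_contains_ball:
  fixes \<phi> :: "'a::complete_space \<Rightarrow> real"
  obtains m :: nat and x r where "r > 0" "ball x r \<subseteq> closure {y. \<phi> y \<le> real m}"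
proof -
  define E where "E m = closure {y. \<phi> y \<le> real m}" for m :: nat
  have "\<Union>(range E) = UNIV"
  proof -
    have "y \<in> E (nat \<lceil>\<phi> y\<rceil>)" for y
      unfolding E_def by (intro subsetD[OF closure_subset]) (simp add: real_nat_ceiling_ge)
    then show ?thesis
      by blast
  qed
  have "\<exists>m. interior (E m) \<noteq> {}"
  proof (rule ccontr)
    assume "\<nexists>m. interior (E m) \<noteq> {}"
    then have "euclidean interior_of \<Union>(range E) = {}"
      by (intro Baire_category_alt) (auto simp: E_def completely_metrizable_space_euclidean)
    with \<open>\<Union>(range E) = UNIV\<close> show False
      by simp
  qed
  then obtain m x where "x \<in> interior (E m)"
    by blast
  then obtain r where "r > 0" "ball x r \<subseteq> E m"
    by (auto simp: mem_interior)
  then show ?thesis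
    using that E_def by blast
qed

lemma dyadic_approximation_series:
  fixes f :: "'a::topological_space \<Rightarrow> real"
  assumes approx: "\<And>h j. continuous_on UNIV h \<Longrightarrow> \<forall>x. \<bar>h x\<bar> \<le> (1/2)^j \<Longrightarrow>
      \<exists>g. continuous_on UNIV g \<and> P j g \<and> (\<forall>x. \<bar>h x - g x\<bar> \<le> (1/2)^Suc j)"
    and f: "continuous_on UNIV f" "\<forall>x. \<bar>f x\<bar> \<le> 1"
  obtains g where "\<And>j. continuous_on UNIV (g j)" "\<And>j. P j (g j)"
    "\<And>n x. \<bar>f x - (\<Sum>j<n. g j x)\<bar> \<le> (1/2)^n"
proof -
  obtain step where step: "\<And>h j. continuous_on UNIV h \<Longrightarrow> \<forall>x. \<bar>h x\<bar> \<le> (1/2)^j \<Longrightarrow>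
      continuous_on UNIV (step h j) \<and> P j (step h j) \<and> (\<forall>x. \<bar>h x - step h j x\<bar> \<le> (1/2)^Suc j)"
    using approx by metis
  define rest where "rest = rec_nat f (\<lambda>j h x. h x - step h j x)"
  have rest_0: "rest 0 = f" and rest_Suc: "rest (Suc j) = (\<lambda>x. rest j x - step (rest j) j x)" for j
    by (simp_all add: rest_def)
  have rest: "continuous_on UNIV (rest j) \<and> (\<forall>x. \<bar>rest j x\<bar> \<le> (1/2)^j)" for j
  proof (induction j)
    case 0
    then show ?case
      using f by (simp add: rest_0)
  next
    case (Suc j)
    then show ?case
      using step[of "rest j" j] by (auto simp: rest_Suc intro!: continuous_intros)
  qed
  define g where "g j = step (rest j) j" for j
  have "f x - (\<Sum>j<n. g j x) = rest n x" for n x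
    by (induction n) (simp_all add: rest_0 rest_Suc g_def)
  then show ?thesis
    using that[of g] step rest by (simp add: g_def)
qed

locale rkhs_containing_continuous = rkhs_space H ip
  for H :: "('a::metric_space \<Rightarrow> real) set" and ip +
  assumes continuous_mem: "continuous_on UNIV f \<Longrightarrow> f \<in> H"
begin

lemma approx_in_dense_ball:
  assumes ball: "ball F0 r \<subseteq> closure {F :: 'a \<Rightarrow>\<^sub>C real. hnorm (apply_bcontfun F) \<le> m}"
    and f: "continuous_on UNIV f" and f_bound: "\<forall>x. \<bar>f x\<bar> \<le> s" and "s < r" and \<delta>: "\<delta> > 0"
  shows "\<exists>g. continuous_on UNIV g \<and> hnorm g \<le> 2 * m \<and> (\<forall>x. \<bar>f x - g x\<bar> < \<delta>)"
proof -
  let ?S = "{F :: 'a \<Rightarrow>\<^sub>C real. hnorm (apply_bcontfun F) \<le> m}"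
  define F where "F = Bcontfun f"
  have "f \<in> bcontfun"
    using f f_bound by (intro bcontfun_normI[where b = s]) auto
  then have F: "apply_bcontfun F = f"
    by (simp add: F_def Bcontfun_inverse)
  have "norm F \<le> s"
    using f_bound by (intro norm_bound) (simp add: F)
  then have "norm F < r" "r > 0"
    using \<open>s < r\<close> norm_ge_zero[of F] by linarith+
  then have "F0 + F \<in> closure ?S" "F0 \<in> closure ?S"
    using ball by (auto simp: dist_norm)
  then obtain a b where a: "a \<in> ?S" "dist a (F0 + F) < \<delta>/2" and b: "b \<in> ?S" "dist b F0 < \<delta>/2"
    using \<delta> unfolding closure_approachable by (meson half_gt_zero)
  have "\<bar>f x - (apply_bcontfun a x - apply_bcontfun b x)\<bar> < \<delta>" for x
    using dist_bounded[of a x "F0 + F"] dist_bounded[of b x F0] a(2) b(2)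
    by (simp add: F dist_real_def abs_le_iff abs_less_iff)
  moreover have "hnorm (\<lambda>x. apply_bcontfun a x - apply_bcontfun b x) \<le> 2 * m"
    using hnorm_diff_le[of "apply_bcontfun a" "apply_bcontfun b"] a(1) b(1) by (simp add: continuous_mem)
  moreover have "continuous_on UNIV (\<lambda>x. apply_bcontfun a x - apply_bcontfun b x)"
    by (intro continuous_intros) auto
  ultimately show ?thesis
    by blast
qed

lemma uniform_approx_with_hnorm_bound:
  obtains K where "K \<ge> 0"
    "\<And>f \<rho> \<delta>. continuous_on UNIV f \<Longrightarrow> \<forall>x. \<bar>f x\<bar> \<le> \<rho> \<Longrightarrow> \<rho> > 0 \<Longrightarrow> \<delta> > 0 \<Longrightarrow>
       \<exists>g. continuous_on UNIV g \<and> hnorm g \<le> K * \<rho> \<and> (\<forall>x. \<bar>f x - g x\<bar> \<le> \<delta>)"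
proof -
  obtain m F0 r where r: "r > 0"
    and ball: "ball F0 r \<subseteq> closure {F :: 'a \<Rightarrow>\<^sub>C real. hnorm (apply_bcontfun F) \<le> real m}"
    by (rule Baire_closure_sublevel_contains_ball)
  have "\<exists>g. continuous_on UNIV g \<and> hnorm g \<le> (4 * real m / r) * \<rho> \<and> (\<forall>x. \<bar>f x - g x\<bar> \<le> \<delta>)"
    if f: "continuous_on UNIV f" and f_bound: "\<forall>x. \<bar>f x\<bar> \<le> \<rho>" and \<rho>: "\<rho> > 0" and \<delta>: "\<delta> > 0"
    for f \<rho> \<delta>
  proof -
    define c where "c = r / (2 * \<rho>)"
    have c: "c > 0" "c * \<rho> < r"
      using r \<rho> by (simp_all add: c_def)
    have "\<forall>x. \<bar>c * f x\<bar> \<le> c * \<rho>"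
      using mult_left_mono[OF spec[OF f_bound], of c] c by (simp add: abs_mult)
    moreover have "continuous_on UNIV (\<lambda>x. c * f x)"
      using f by (intro continuous_intros)
    ultimately obtain g where g: "continuous_on UNIV g" "hnorm g \<le> 2 * real m"
      and approx: "\<forall>x. \<bar>c * f x - g x\<bar> < c * \<delta>"
      using approx_in_dense_ball[OF ball _ _ c(2) mult_pos_pos[OF c(1) \<delta>]] by blast
    have "hnorm (\<lambda>x. (1/c) * g x) = (1/c) * hnorm g"
      using hnorm_scale[OF continuous_mem[OF g(1)], of "1/c"] c by simp
    also have "\<dots> \<le> (1/c) * (2 * real m)"
      using g(2) c by (intro mult_left_mono) auto
    also have "\<dots> = (4 * real m / r) * \<rho>"
      using \<rho> by (simp add: c_def)
    finally have "hnorm (\<lambda>x. (1/c) * g x) \<le> (4 * real m / r) * \<rho>" .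
    moreover have "\<bar>f x - (1/c) * g x\<bar> \<le> \<delta>" for x
    proof -
      have "c * \<bar>f x - (1/c) * g x\<bar> = \<bar>c * (f x - (1/c) * g x)\<bar>"
        using c by (simp add: abs_mult)
      also have "\<dots> = \<bar>c * f x - g x\<bar>"
        using c by (simp add: right_diff_distrib)
      finally have "c * \<bar>f x - (1/c) * g x\<bar> < c * \<delta>"
        using approx by simp
      with c show ?thesis
        by simp
    qed
    moreover have "continuous_on UNIV (\<lambda>x. (1/c) * g x)"
      using g(1) by (intro continuous_intros)
    ultimately show ?thesis
      by blast
  qed
  then show ?thesis
    using that[of "4 * real m / r"] r by simp
qed

lemma hnorm_bounded_by_sup:
  obtains M where "\<And>f. continuous_on UNIV f \<Longrightarrow> \<forall>x. \<bar>f x\<bar> \<le> 1 \<Longrightarrow> hnorm f \<le> M"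
proof -
  obtain K where "K \<ge> 0" and approx: "\<And>f \<rho> \<delta>. continuous_on UNIV f \<Longrightarrow> \<forall>x. \<bar>f x\<bar> \<le> \<rho> \<Longrightarrow>
      \<rho> > 0 \<Longrightarrow> \<delta> > 0 \<Longrightarrow> \<exists>g. continuous_on UNIV g \<and> hnorm g \<le> K * \<rho> \<and> (\<forall>x. \<bar>f x - g x\<bar> \<le> \<delta>)"
    using uniform_approx_with_hnorm_bound by blast
  have "hnorm f \<le> 2 * K" if f: "continuous_on UNIV f" "\<forall>x. \<bar>f x\<bar> \<le> 1" for f
  proof -
    have "\<exists>g. continuous_on UNIV g \<and> hnorm g \<le> K * (1/2)^j \<and> (\<forall>x. \<bar>h x - g x\<bar> \<le> (1/2)^Suc j)"
      if "continuous_on UNIV h" "\<forall>x. \<bar>h x\<bar> \<le> (1/2)^j" for h j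
      by (intro approx[OF that]) simp_all
    then obtain g where g: "\<And>j. continuous_on UNIV (g j)" and g_hnorm: "\<And>j. hnorm (g j) \<le> K * (1/2)^j"
      and g_approx: "\<And>n x. \<bar>f x - (\<Sum>j<n. g j x)\<bar> \<le> (1/2)^n"
      using dyadic_approximation_series[where P = "\<lambda>j g. hnorm g \<le> K * (1/2)^j", OF _ f] by blast
    have geometric: "(\<lambda>j. K * (1/2)^j) sums (2 * K)"
      using sums_mult[OF geometric_sums[of "1/2::real"], of K] by (simp add: mult.commute)
    have summable: "summable (\<lambda>j. hnorm (g j))"
      using g_hnorm continuous_mem[OF g] hnorm_nonneg
      by (intro summable_comparison_test'[OF sums_summable[OF geometric]]) auto
    have "(\<lambda>n. \<Sum>j<n. g j x) \<longlonglongrightarrow> f x" for x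
    proof -
      have "(\<lambda>n. f x - (\<Sum>j<n. g j x)) \<longlonglongrightarrow> 0"
        using g_approx by (intro Lim_null_comparison[OF _ LIMSEQ_realpow_zero[of "1/2"]]) auto
      then have "(\<lambda>n. f x - (f x - (\<Sum>j<n. g j x))) \<longlonglongrightarrow> f x - 0"
        by (intro tendsto_diff tendsto_const)
      then show ?thesis
        by simp
    qed
    then have "hnorm f \<le> (\<Sum>j. hnorm (g j))"
      using continuous_mem[OF g] continuous_mem[OF f(1)] summable by (intro hnorm_le_suminf)
    also have "\<dots> \<le> (\<Sum>j. K * (1/2)^j)"
      using g_hnorm summable sums_summable[OF geometric] by (intro suminf_le) auto
    also have "\<dots> = 2 * K"
      using geometric by (rule sums_unique[symmetric])
    finally show ?thesis .
  qed
  then show ?thesis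
    using that by blast
qed

end

section \<open>Points sharing an evaluation bound\<close>

lemma disjoint_bumps_at_finite_set:
  fixes S :: "'a::metric_space set"
  assumes "finite S"
  obtains b :: "'a \<Rightarrow> 'a \<Rightarrow> real" where "\<And>x. continuous_on UNIV (b x)"
    "\<And>x y. \<bar>b x y\<bar> \<le> 1" "\<And>x. b x x = 1"
    "\<And>x x' y. x \<in> S \<Longrightarrow> x' \<in> S \<Longrightarrow> x \<noteq> x' \<Longrightarrow> b x y = 0 \<or> b x' y = 0"
proof -
  define D where "D = (\<lambda>(x, y). dist x y) ` {(x, y). x \<in> S \<and> y \<in> S \<and> x \<noteq> y}"
  have "finite D"
    unfolding D_def by (rule finite_imageI, rule finite_subset[of _ "S \<times> S"]) (use assms in auto)
  \<comment> \<open>inserting 1 keeps the minimum meaningful when \<open>S\<close> has fewer than two points\<close>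
  define \<delta> where "\<delta> = Min (insert 1 D)"
  have \<delta>: "\<delta> > 0"
    unfolding \<delta>_def using \<open>finite D\<close> by (auto simp: D_def)
  have \<delta>_le: "\<delta> \<le> dist x x'" if "x \<in> S" "x' \<in> S" "x \<noteq> x'" for x x'
  proof -
    have "dist x x' \<in> D"
      unfolding D_def using that by (auto intro!: image_eqI[of _ _ "(x, x')"])
    then show ?thesis
      unfolding \<delta>_def using \<open>finite D\<close> by (intro Min_le) auto
  qed
  define b where "b x y = max 0 (1 - 2 * dist x y / \<delta>)" for x y :: 'a
  have support: "dist x y < \<delta> / 2" if "b x y \<noteq> 0" for x y
  proof -
    have "2 * dist x y / \<delta> < 1"
    proof (rule ccontr)
      assume "\<not> 2 * dist x y / \<delta> < 1"
      then have "b x y = 0"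
        by (simp add: b_def)
      with that show False
        by simp
    qed
    with \<delta> show ?thesis
      by (simp add: field_simps)
  qed
  show ?thesis
  proof (rule that)
    show "continuous_on UNIV (b x)" for x
      unfolding b_def by (intro continuous_intros) (use \<delta> in auto)
    show "\<bar>b x y\<bar> \<le> 1" "b x x = 1" for x y
      using \<delta> by (simp_all add: b_def)
    show "b x y = 0 \<or> b x' y = 0" if "x \<in> S" "x' \<in> S" "x \<noteq> x'" for x x' y
    proof (rule ccontr)
      assume "\<not> (b x y = 0 \<or> b x' y = 0)"
      then have "dist x x' < \<delta>"
        using dist_triangle_half_l[OF support support] by blast
      with \<delta>_le[OF that] show False
        by simp
    qed
  qed
qed

lemma abs_sum_le_one_if_pairwise_zero:
  fixes u :: "'a \<Rightarrow> real"
  assumes "\<And>x. x \<in> G \<Longrightarrow> \<bar>u x\<bar> \<le> 1"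
    and "\<And>x x'. x \<in> G \<Longrightarrow> x' \<in> G \<Longrightarrow> x \<noteq> x' \<Longrightarrow> u x = 0 \<or> u x' = 0"
  shows "\<bar>\<Sum>x\<in>G. u x\<bar> \<le> 1"
proof (cases "finite G \<and> (\<exists>x\<in>G. u x \<noteq> 0)")
  case True
  then obtain x where x: "x \<in> G" "u x \<noteq> 0" and "finite G"
    by blast
  have "(\<Sum>x'\<in>G - {x}. u x') = 0"
    using assms(2)[OF x(1)] x(2) by (intro sum.neutral) blast
  then have "(\<Sum>x\<in>G. u x) = u x"
    using sum.remove[OF \<open>finite G\<close> x(1), of u] by simp
  then show ?thesis
    using assms(1)[OF x(1)] by simp
qed auto

context rkhs_containing_continuous
begin

lemma sum_hnorm_power2_le_if_disjoint:
  assumes M: "\<And>f. continuous_on UNIV f \<Longrightarrow> \<forall>x. \<bar>f x\<bar> \<le> 1 \<Longrightarrow> hnorm f \<le> M"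
    and S: "finite S" and b_cont: "\<And>x. continuous_on UNIV (b x)" and b_bound: "\<And>x y. \<bar>b x y\<bar> \<le> 1"
    and b_disj: "\<And>x x' y. x \<in> S \<Longrightarrow> x' \<in> S \<Longrightarrow> x \<noteq> x' \<Longrightarrow> b x y = 0 \<or> b x' y = 0"
  shows "(\<Sum>x\<in>S. (hnorm (b x))\<^sup>2) \<le> M\<^sup>2"
proof -
  have b: "b x \<in> H" for x
    using b_cont by (rule continuous_mem)
  obtain e where e: "\<forall>x. e x = 1 \<or> e x = -1"
    and e_sum: "(\<Sum>x\<in>S. (hnorm (b x))\<^sup>2) \<le> (hnorm (\<lambda>y. \<Sum>x\<in>S. e x * b x y))\<^sup>2"
    using exists_signs_hnorm_sum_ge[of S b, OF S b] by blast
  have "hnorm (\<lambda>y. \<Sum>x\<in>S. e x * b x y) \<le> M"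
  proof (rule M)
    show "continuous_on UNIV (\<lambda>y. \<Sum>x\<in>S. e x * b x y)"
      using b_cont by (intro continuous_intros)
    have "\<bar>e x\<bar> = 1" for x
      using e[rule_format, of x] by auto
    then have "\<bar>e x * b x y\<bar> \<le> 1" for x y
      using b_bound[of x y] by (simp add: abs_mult)
    moreover have "e x * b x y = 0 \<or> e x' * b x' y = 0" if "x \<in> S" "x' \<in> S" "x \<noteq> x'" for x x' y
      using b_disj[OF that, of y] by auto
    ultimately show "\<forall>y. \<bar>\<Sum>x\<in>S. e x * b x y\<bar> \<le> 1"
      by (simp add: abs_sum_le_one_if_pairwise_zero)
  qed
  moreover have "(\<lambda>y. \<Sum>x\<in>S. e x * b x y) \<in> H"
    using S b by (simp add: sum_mem scale_mem)
  ultimately have "(hnorm (\<lambda>y. \<Sum>x\<in>S. e x * b x y))\<^sup>2 \<le> M\<^sup>2"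
    by (simp add: power_mono hnorm_nonneg)
  with e_sum show ?thesis
    by linarith
qed

lemma card_le_of_eval_bound:
  assumes M: "\<And>f. continuous_on UNIV f \<Longrightarrow> \<forall>x. \<bar>f x\<bar> \<le> 1 \<Longrightarrow> hnorm f \<le> M"
    and S: "finite S" and eval: "\<And>x f. x \<in> S \<Longrightarrow> f \<in> H \<Longrightarrow> \<bar>f x\<bar> \<le> c * hnorm f"
  shows "real (card S) \<le> (c * M)\<^sup>2"
proof -
  obtain b :: "'a \<Rightarrow> 'a \<Rightarrow> real" where b_cont: "\<And>x. continuous_on UNIV (b x)"
    and b_bound: "\<And>x y. \<bar>b x y\<bar> \<le> 1" and b_at: "\<And>x. b x x = 1"
    and b_disj: "\<And>x x' y. x \<in> S \<Longrightarrow> x' \<in> S \<Longrightarrow> x \<noteq> x' \<Longrightarrow> b x y = 0 \<or> b x' y = 0"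
    using disjoint_bumps_at_finite_set[OF S] by blast
  have b_large: "1 \<le> c\<^sup>2 * (hnorm (b x))\<^sup>2" if "x \<in> S" for x
  proof -
    have "1 \<le> c * hnorm (b x)"
      using eval[OF that continuous_mem[OF b_cont], of x] b_at by simp
    then have "1\<^sup>2 \<le> (c * hnorm (b x))\<^sup>2"
      using power_mono[of 1 "c * hnorm (b x)" 2] by simp
    then show ?thesis
      by (simp add: power_mult_distrib)
  qed
  have "real (card S) = (\<Sum>x\<in>S. 1)"
    by simp
  also have "\<dots> \<le> (\<Sum>x\<in>S. c\<^sup>2 * (hnorm (b x))\<^sup>2)"
    using b_large by (rule sum_mono)
  also have "\<dots> = c\<^sup>2 * (\<Sum>x\<in>S. (hnorm (b x))\<^sup>2)"
    by (simp add: sum_distrib_left)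
  also have "\<dots> \<le> c\<^sup>2 * M\<^sup>2"
    using sum_hnorm_power2_le_if_disjoint[OF M S b_cont b_bound b_disj] by (simp add: mult_left_mono)
  also have "\<dots> = (c * M)\<^sup>2"
    by (simp add: power_mult_distrib)
  finally show ?thesis .
qed

lemma countable_domain: "countable (UNIV :: 'a set)"
proof -
  obtain M where M: "\<And>f. continuous_on UNIV f \<Longrightarrow> \<forall>x. \<bar>f x\<bar> \<le> 1 \<Longrightarrow> hnorm f \<le> M"
    using hnorm_bounded_by_sup by blast
  define A where "A n = {x. \<forall>f\<in>H. \<bar>f x\<bar> \<le> real n * hnorm f}" for n :: nat
  have finite: "finite (A n)" for n
  proof -
    have "card S \<le> nat \<lceil>(real n * M)\<^sup>2\<rceil>" if "S \<subseteq> A n" "finite S" for S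
    proof -
      have "real (card S) \<le> (real n * M)\<^sup>2"
        by (rule card_le_of_eval_bound[OF M \<open>finite S\<close>]) (use that in \<open>auto simp: A_def\<close>)
      then have "real (card S) \<le> real (nat \<lceil>(real n * M)\<^sup>2\<rceil>)"
        using real_nat_ceiling_ge order_trans by blast
      then show ?thesis
        by (simp only: of_nat_le_iff)
    qed
    then show ?thesis
      using finite_if_finite_subsets_card_bdd[of "A n"] by blast
  qed
  have "x \<in> (\<Union>n. A n)" for x
  proof -
    obtain C where C: "\<forall>f\<in>H. \<bar>f x\<bar> \<le> C * hnorm f"
      using eval_bounded by blast
    have "\<bar>f x\<bar> \<le> real (nat \<lceil>C\<rceil>) * hnorm f" if "f \<in> H" for f
      using bspec[OF C that] mult_right_mono[OF real_nat_ceiling_ge[of C] hnorm_nonneg[OF that]]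
      by linarith
    then show ?thesis
      unfolding A_def by blast
  qed
  then have "UNIV \<subseteq> (\<Union>n. A n)"
    by blast
  moreover have "countable (\<Union>n. A n)"
    by (rule countable_UN) (simp_all add: countable_finite finite)
  ultimately show ?thesis
    by (rule countable_subset)
qed

end

theorem theorem1:
  fixes X :: "'a::metric_space itself"
  assumes "compact (UNIV :: 'a set)"
    and "uncountable (UNIV :: 'a set)"
  shows "\<not> (\<exists>(H :: ('a \<Rightarrow> real) set) ip. rkhs H ip \<and>
              {f :: 'a \<Rightarrow> real. continuous_on UNIV f} \<subseteq> H)"
proof
  assume "\<exists>(H :: ('a \<Rightarrow> real) set) ip. rkhs H ip \<and> {f :: 'a \<Rightarrow> real. continuous_on UNIV f} \<subseteq> H"
  then obtain H :: "('a \<Rightarrow> real) set" and ip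
    where "rkhs H ip" and "{f :: 'a \<Rightarrow> real. continuous_on UNIV f} \<subseteq> H"
    by blast
  then interpret rkhs_containing_continuous H ip
    by unfold_locales auto
  show False
    using countable_domain assms(2) by simp
qed

end
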